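(* Let $q$ be a prime power, $m\ge 2$, $1\le k\le n-1$, and let $\mathcal{C}\subseteq \mathbb{F}_{q^m}^n$ be a linear MRD code of dimension $k$, written as $\mathcal{C}=\mathrm{rs}[\,I_k\mid X\,]$ with $X\in\mathbb{F}_{q^m}^{k\times(n-k)}$ (its generator matrix in systematic form). Let $0<s<m$ with $\gcd(s,m)=1$. Then $\mathcal{C}$ is a generalized Gabidulin code with parameter $s$ if and only if $\mathrm{rk}(X^{(q^s)}-X) = 1$.
   Context: Fix an $\mathbb{F}_q$-basis $b_1,\dots,b_m$ of $\mathbb{F}_{q^m}$. The rank of $v\in\mathbb{F}_{q^m}^n$ is the rank of the matrix $M\in\mathbb{F}_q^{m\times n}$ with $v_j=\sum_i M_{ij}b_i$, and the rank distance is $d_R(u,v)=\mathrm{rk}(u-v)$. A linear rank-metric code of length $n$ and dimension $k$ is a $k$-dimensional $\mathbb{F}_{q^m}$-subspace of $\mathbb{F}_{q^m}^n$; it is MRD if its minimum rank distance equals $n-k+1$. Every linear MRD code has a unique generator matrix of the form $[\,I_k\mid X\,]$. $\mathrm{rs}(G)$ is the $\mathbb{F}_{q^m}$-row space of $G$. For a matrix $X$, $X^{(q^s)}$ is obtained by raising each entry to the $q^s$-th power. For $s$ coprime to $m$ and $g_1,\dots,g_n\in\mathbb{F}_{q^m}$ linearly independent over $\mathbb{F}_q$, the generalized Gabidulin code with parameter $s$ and dimension $k$ is the row space of the $k\times n$ matrix whose $(i,j)$ entry is $g_j^{q^{s(i-1)}}$, $i=1,\dots,k$. *)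

theory Defs
  imports "Jordan_Normal_Form.DL_Rank"
begin

definition subfield_q :: "nat \<Rightarrow> 'a::{field,finite} set" where
  "subfield_q q = {x. x ^ q = x}"

definition Fq_lin_indep :: "nat \<Rightarrow> (nat \<Rightarrow> 'a::{field,finite}) \<Rightarrow> nat set \<Rightarrow> bool" where
  "Fq_lin_indep q g J \<longleftrightarrow>
     (\<forall>c. (\<forall>j\<in>J. c j \<in> subfield_q q) \<longrightarrow> (\<Sum>j\<in>J. c j * g j) = 0 \<longrightarrow> (\<forall>j\<in>J. c j = 0))"

text \<open>Rank of v over F_q: the rank of its coordinate matrix M (column j = coordinates of v_j
  in a fixed F_q-basis), i.e. the maximal number of F_q-linearly independent columns,
  i.e. the maximal number of F_q-linearly independent entries of v.\<close>
definition rank_q :: "nat \<Rightarrow> 'a::{field,finite} vec \<Rightarrow> nat" where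
  "rank_q q v = Max {card J | J. J \<subseteq> {0..<dim_vec v} \<and> Fq_lin_indep q (\<lambda>j. v $ j) J}"

definition rank_dist :: "nat \<Rightarrow> 'a::{field,finite} vec \<Rightarrow> 'a vec \<Rightarrow> nat" where
  "rank_dist q u v = rank_q q (u - v)"

definition min_rank_dist :: "nat \<Rightarrow> 'a::{field,finite} vec set \<Rightarrow> nat" where
  "min_rank_dist q C = Min {rank_dist q u v | u v. u \<in> C \<and> v \<in> C \<and> u \<noteq> v}"

definition row_space :: "'a::field mat \<Rightarrow> 'a vec set" where
  "row_space G = {vec (dim_col G) (\<lambda>j. \<Sum>i<dim_row G. c i * G $$ (i, j)) | c. True}"

definition sys_gen :: "nat \<Rightarrow> nat \<Rightarrow> 'a::field mat \<Rightarrow> 'a mat" where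
  "sys_gen k n X = mat k n (\<lambda>(i, j). if j < k then (if i = j then 1 else 0) else X $$ (i, j - k))"

definition gab_mat :: "nat \<Rightarrow> nat \<Rightarrow> nat \<Rightarrow> nat \<Rightarrow> (nat \<Rightarrow> 'a::field) \<Rightarrow> 'a mat" where
  "gab_mat q s k n g = mat k n (\<lambda>(i, j). g j ^ (q ^ (s * i)))"

definition is_gen_gabidulin :: "nat \<Rightarrow> nat \<Rightarrow> nat \<Rightarrow> nat \<Rightarrow> 'a::{field,finite} vec set \<Rightarrow> bool" where
  "is_gen_gabidulin q s k n C \<longleftrightarrow>
     (\<exists>g. Fq_lin_indep q g {0..<n} \<and> C = row_space (gab_mat q s k n g))"

definition frob_mat :: "nat \<Rightarrow> 'a::field mat \<Rightarrow> 'a mat" where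
  "frob_mat e X = map_mat (\<lambda>x. x ^ e) X"

end

theory Submission
  imports Defs "HOL-Number_Theory.Residues"
begin

text \<open>
  Let \<open>theta\<close> be the Frobenius \<open>x \<mapsto> x^(q^s)\<close>, whose fixed field is \<open>F_q\<close> as \<open>gcd(s, m) = 1\<close>, and
  \<open>D = theta X - X\<close>. The rank bound \<open>n - k + 1\<close> on nonzero codewords, combined with the
  invertibility of Moore matrices \<open>(theta^i g_j)\<close> of \<open>F_q\<close>-independent families, shows that a
  vector \<open>g \<noteq> 0\<close> whose Frobenius powers \<open>theta^i g\<close>, \<open>i < k\<close>, all lie in the code is
  \<open>F_q\<close>-independent and that the Moore matrix of \<open>g\<close> then generates the code.

  If \<open>D = f h^T\<close>, take a nonzero message \<open>a\<close> with \<open>\<Sum>_l theta^i(a_l) f_l = 0\<close> for \<open>0 < i < k\<close>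
  (\<open>k - 1\<close> equations in \<open>k\<close> unknowns); then \<open>theta^i (a [I | X]) = theta^i(a) [I | X]\<close>, so
  \<open>g = a [I | X]\<close> works. Conversely, if the code is generated by the Moore matrix \<open>G\<close> of \<open>g\<close>,
  the relations \<open>theta(G_i X) = G_(i+1) X\<close> make all rows of \<open>(theta G) D\<close> but the last vanish,
  so \<open>rk D \<le> 1\<close>; and \<open>D \<noteq> 0\<close>, since otherwise \<open>X\<close> would be defined over \<open>F_q\<close> and the
  first row of \<open>[I | X]\<close> would be a codeword of rank \<open>1 < n - k + 1\<close>.
\<close>

section \<open>Finite fields and the Frobenius automorphism\<close>

text \<open>\<open>finite_field_power_card_eq_same\<close> requires the sort \<open>finite_field\<close>, which the type
  variable of sort \<open>{field, finite}\<close> used here does not have.\<close>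
lemma power_card_UNIV_eq_self:
  fixes x :: "'a::{field,finite}"
  shows "x ^ card (UNIV :: 'a set) = x"
proof (cases "x = 0")
  case False
  let ?N = "card (UNIV :: 'a set)"
  have N_pos: "?N > 0" by (simp add: finite_UNIV_card_ge_0)
  have "(\<Prod>y\<in>UNIV - {0}. x * y) = (\<Prod>y\<in>UNIV - {0}. y)"
    by (rule prod.reindex_bij_witness[of _ "\<lambda>y. y / x" "\<lambda>y. x * y"]) (use False in auto)
  moreover have "(\<Prod>y\<in>UNIV - {0}. x * y) = x ^ (?N - 1) * (\<Prod>y\<in>UNIV - {0}. y)"
    by (simp add: prod.distrib card_Diff_singleton)
  moreover have "(\<Prod>y\<in>UNIV - {0::'a}. y) \<noteq> 0" by simp
  ultimately have "x ^ (?N - 1) = 1" by simp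
  then have "x * x ^ (?N - 1) = x" by simp
  then show ?thesis using N_pos by (simp flip: power_Suc)
qed (simp add: finite_UNIV_card_ge_0)

locale frobenius_field =
  fixes field :: "'a::{field,finite} itself" and q m s :: nat
  assumes card_UNIV_eq: "card (UNIV :: 'a set) = q ^ m"
    and prime_power: "\<exists>p e. prime p \<and> e \<ge> 1 \<and> q = p ^ e"
    and m_ge_2: "m \<ge> 2"
    and coprime_s_m: "coprime s m"
begin

abbreviation Fq :: "'a set" where "Fq \<equiv> subfield_q q"

lemma q_pos: "q > 0"
  using prime_power prime_gt_0_nat by auto

lemma q_eq_CHAR_power: "prime CHAR('a) \<and> (\<exists>e. q = CHAR('a) ^ e)"
proof -
  obtain p e where p: "prime p" "e \<ge> 1" "q = p ^ e" using prime_power by blast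
  have prime_CHAR: "prime CHAR('a)"
    by (rule prime_CHAR_semidom) (simp add: finite_imp_CHAR_pos)
  have "CHAR('a) dvd p ^ (e * m)"
    using CHAR_dvd_CARD[where 'a = 'a] card_UNIV_eq p(3) by (simp add: power_mult)
  then have "CHAR('a) dvd p" using prime_CHAR prime_dvd_power by blast
  then have "CHAR('a) = p" using p(1) prime_CHAR by (simp add: primes_dvd_imp_eq)
  then show ?thesis using p prime_CHAR by blast
qed

lemma frobenius_add: "(x + y :: 'a) ^ (q ^ j) = x ^ (q ^ j) + y ^ (q ^ j)"
proof -
  obtain e where "q = CHAR('a) ^ e" using q_eq_CHAR_power by blast
  then have "q ^ j = CHAR('a) ^ (e * j)" by (simp add: power_mult)
  then show ?thesis using freshmans_dream' q_eq_CHAR_power by blast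
qed

lemma frobenius_minus: "(- x :: 'a) ^ (q ^ j) = - (x ^ (q ^ j))"
  using frobenius_add[of "-x" x j] q_pos by (simp add: eq_neg_iff_add_eq_0 power_0_left)

lemma frobenius_diff: "(x - y :: 'a) ^ (q ^ j) = x ^ (q ^ j) - y ^ (q ^ j)"
  using frobenius_add[of x "-y" j] frobenius_minus[of y j] by simp

lemma frobenius_sum: "(sum (f :: 'b \<Rightarrow> 'a) A) ^ (q ^ j) = (\<Sum>i\<in>A. f i ^ (q ^ j))"
  by (induction A rule: infinite_finite_induct) (auto simp: frobenius_add q_pos power_0_left)

lemma power_q_power_m_mult: "(x::'a) ^ (q ^ (m * r)) = x"
proof (induction r)
  case (Suc r)
  have "x ^ (q ^ (m * Suc r)) = (x ^ (q ^ (m * r))) ^ card (UNIV :: 'a set)"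
    by (simp add: card_UNIV_eq power_add power_mult[symmetric] mult.commute)
  then show ?case using Suc power_card_UNIV_eq_self by simp
qed simp

lemma subfield_q_iff: "x \<in> Fq \<longleftrightarrow> x ^ q = x"
  by (simp add: subfield_q_def)

lemma subfield_q_frobenius: "x \<in> Fq \<Longrightarrow> x ^ (q ^ j) = x"
  by (induction j) (simp_all add: subfield_q_iff power_mult)

lemma subfield_q_0 [simp]: "0 \<in> Fq" and subfield_q_1 [simp]: "1 \<in> Fq"
  using q_pos by (simp_all add: subfield_q_iff power_0_left)

lemma subfield_q_add: "x \<in> Fq \<Longrightarrow> y \<in> Fq \<Longrightarrow> x + y \<in> Fq"
  using frobenius_add[of x y 1] by (simp add: subfield_q_iff)

lemma subfield_q_diff: "x \<in> Fq \<Longrightarrow> y \<in> Fq \<Longrightarrow> x - y \<in> Fq"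
  using frobenius_diff[of x y 1] by (simp add: subfield_q_iff)

lemma subfield_q_mult: "x \<in> Fq \<Longrightarrow> y \<in> Fq \<Longrightarrow> x * y \<in> Fq"
  by (simp add: subfield_q_iff power_mult_distrib)

lemma subfield_q_divide: "x \<in> Fq \<Longrightarrow> y \<in> Fq \<Longrightarrow> x / y \<in> Fq"
  by (simp add: subfield_q_iff power_divide)

lemma subfield_q_minus: "x \<in> Fq \<Longrightarrow> - x \<in> Fq"
  using subfield_q_diff[of 0 x] by simp

lemma card_subfield_q_ge_2: "card Fq \<ge> 2"
proof -
  have "card {0::'a, 1} \<le> card Fq" by (intro card_mono) auto
  then show ?thesis by simp
qed

definition theta :: "nat \<Rightarrow> 'a \<Rightarrow> 'a" where
  "theta i x = x ^ (q ^ (s * i))"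

lemma theta_mult: "theta i (x * y) = theta i x * theta i y"
  by (simp add: theta_def power_mult_distrib)

lemma theta_sum: "theta i (sum f A) = (\<Sum>j\<in>A. theta i (f j))"
  by (simp add: theta_def frobenius_sum)

lemma theta_0 [simp]: "theta 0 x = x"
  by (simp add: theta_def)

lemma theta_eq_0_iff [simp]: "theta i x = 0 \<longleftrightarrow> x = 0"
  using q_pos by (simp add: theta_def)

lemma theta_one [simp]: "theta i 1 = 1"
  by (simp add: theta_def)

lemma theta_theta: "theta i (theta j x) = theta (i + j) x"
  by (simp add: theta_def power_mult[symmetric] power_add algebra_simps)

lemma theta_subfield_q: "c \<in> Fq \<Longrightarrow> theta i c = c"
  by (simp add: theta_def subfield_q_frobenius)

lemma theta_Fq_lincomb:
  "(\<And>l. l \<in> L \<Longrightarrow> c l \<in> Fq) \<Longrightarrow> theta i (\<Sum>l\<in>L. c l * w l) = (\<Sum>l\<in>L. c l * theta i (w l))"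
  by (simp add: theta_sum theta_mult theta_subfield_q)

lemma theta_inverse: "theta i (x ^ (q ^ (s * i * (m - 1)))) = x"
proof -
  have "s * i * (m - 1) + s * i = m * (s * i)"
    using m_ge_2 by (cases m) (auto simp: algebra_simps)
  then show ?thesis
    by (simp add: theta_def power_mult[symmetric] power_add[symmetric] power_q_power_m_mult)
qed

text \<open>Since \<open>gcd(s, m) = 1\<close>, a Bezout relation \<open>s a = m b + 1\<close> turns \<open>x^(q^s) = x\<close>
  into \<open>x = x^(q^(s a)) = x^(q^(m b + 1)) = x^q\<close>.\<close>
lemma theta_fixed_imp_subfield_q:
  assumes "theta 1 x = x"
  shows "x \<in> Fq"
proof -
  have "s \<noteq> 0"
  proof
    assume "s = 0"
    with coprime_s_m have "m = 1" by simp
    with m_ge_2 show False by simp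
  qed
  then obtain a b where "s * a = m * b + 1"
    using bezout_nat[of s m] coprime_s_m by auto
  have iterate: "theta r x = x" for r
  proof (induction r)
    case (Suc r)
    then show ?case using assms theta_theta[of 1 r x] by simp
  qed simp
  have "x = theta a x" using iterate by simp
  also have "\<dots> = (x ^ (q ^ (m * b))) ^ q"
    using \<open>s * a = m * b + 1\<close> by (simp add: theta_def power_add power_mult[symmetric] mult.commute)
  also have "\<dots> = x ^ q" by (simp add: power_q_power_m_mult)
  finally show ?thesis by (simp add: subfield_q_iff)
qed

end

section \<open>Linear algebra and rank distance\<close>

lemma sum_delta_mult:
  fixes f :: "'b \<Rightarrow> 'a::semiring_1"
  assumes "finite A"
  shows "(\<Sum>l\<in>A. (if l = i then 1 else 0) * f l) = (if i \<in> A then f i else 0)"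
proof -
  have "(\<Sum>l\<in>A. (if l = i then 1 else 0) * f l) = (\<Sum>l\<in>A. if l = i then f l else 0)"
    by (rule sum.cong) simp_all
  then show ?thesis using assms by (simp add: sum.delta')
qed

lemma Fq_lin_indepD:
  "Fq_lin_indep q b J \<Longrightarrow> (\<And>j. j \<in> J \<Longrightarrow> c j \<in> subfield_q q) \<Longrightarrow>
   (\<Sum>j\<in>J. c j * b j) = 0 \<Longrightarrow> j \<in> J \<Longrightarrow> c j = 0"
  by (simp add: Fq_lin_indep_def)

lemma rank_q_le_dim_vec: "rank_q q v \<le> dim_vec v"
proof -
  let ?S = "{card J |J. J \<subseteq> {0..<dim_vec v} \<and> Fq_lin_indep q (\<lambda>j. v $ j) J}"
  have "finite ?S"
    by (rule finite_subset[of _ "card ` Pow {0..<dim_vec v}"]) auto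
  moreover have "?S \<noteq> {}"
    by (auto simp: Fq_lin_indep_def intro!: exI[of _ "{}"])
  moreover have "\<forall>a\<in>?S. a \<le> dim_vec v"
    using card_mono[of "{0..<dim_vec v}"] by auto
  ultimately show ?thesis
    unfolding rank_q_def by simp
qed

lemma min_rank_dist_le_rank_q:
  assumes "C \<subseteq> carrier_vec n" "u \<in> C" "v \<in> C" "u \<noteq> v"
  shows "min_rank_dist q C \<le> rank_q q (u - v)"
proof -
  let ?S = "{rank_dist q u v |u v. u \<in> C \<and> v \<in> C \<and> u \<noteq> v}"
  have "?S \<subseteq> {..n}"
  proof
    fix r assume "r \<in> ?S"
    then obtain u' v' where "r = rank_q q (u' - v')" "u' \<in> C" "v' \<in> C"
      by (auto simp: rank_dist_def)
    then show "r \<in> {..n}"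
      using rank_q_le_dim_vec[of q "u' - v'"] assms(1) by auto
  qed
  then have "finite ?S" using finite_subset by blast
  moreover have "rank_dist q u v \<in> ?S" using assms by blast
  ultimately show ?thesis
    unfolding min_rank_dist_def rank_dist_def by (rule Min_le)
qed

definition square_mat :: "nat \<Rightarrow> (nat \<Rightarrow> nat \<Rightarrow> 'a) \<Rightarrow> 'a mat" where
  "square_mat t M = mat t t (\<lambda>(i, p). M i p)"

lemma square_mat_carrier: "square_mat t M \<in> carrier_mat t t"
  by (simp add: square_mat_def)

lemma square_mat_mult_vec:
  "i < t \<Longrightarrow> v \<in> carrier_vec t \<Longrightarrow> (square_mat t M *\<^sub>v v) $ i = (\<Sum>p<t. M i p * v $ p)"
  by (simp add: square_mat_def scalar_prod_def row_def atLeast0LessThan)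

lemma det_square_mat_eq_0_iff:
  fixes M :: "nat \<Rightarrow> nat \<Rightarrow> 'a::field"
  shows "det (square_mat t M) = 0 \<longleftrightarrow>
    (\<exists>y. (\<exists>p<t. y p \<noteq> 0) \<and> (\<forall>i<t. (\<Sum>p<t. M i p * y p) = 0))"
proof -
  have "det (square_mat t M) = 0 \<longleftrightarrow>
      (\<exists>v. v \<in> carrier_vec t \<and> v \<noteq> 0\<^sub>v t \<and> square_mat t M *\<^sub>v v = 0\<^sub>v t)"
    by (rule det_0_iff_vec_prod_zero[OF square_mat_carrier])
  also have "\<dots> \<longleftrightarrow> (\<exists>y. (\<exists>p<t. y p \<noteq> 0) \<and> (\<forall>i<t. (\<Sum>p<t. M i p * y p) = 0))"
  proof
    assume "\<exists>v. v \<in> carrier_vec t \<and> v \<noteq> 0\<^sub>v t \<and> square_mat t M *\<^sub>v v = 0\<^sub>v t"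
    then obtain v where v: "v \<in> carrier_vec t" "v \<noteq> 0\<^sub>v t" "square_mat t M *\<^sub>v v = 0\<^sub>v t"
      by blast
    have "\<exists>p<t. v $ p \<noteq> 0"
      using v(1,2) by (metis carrier_vecD eq_vecI index_zero_vec)
    moreover have "\<forall>i<t. (\<Sum>p<t. M i p * v $ p) = 0"
      using v(1,3) square_mat_mult_vec by (metis index_zero_vec(1))
    ultimately show "\<exists>y. (\<exists>p<t. y p \<noteq> 0) \<and> (\<forall>i<t. (\<Sum>p<t. M i p * y p) = 0)"
      by blast
  next
    assume "\<exists>y. (\<exists>p<t. y p \<noteq> 0) \<and> (\<forall>i<t. (\<Sum>p<t. M i p * y p) = 0)"
    then obtain y where y: "\<exists>p<t. y p \<noteq> 0" "\<forall>i<t. (\<Sum>p<t. M i p * y p) = 0"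
      by blast
    have "vec t y \<noteq> 0\<^sub>v t"
      using y(1) by (metis index_vec index_zero_vec(1))
    moreover have "square_mat t M *\<^sub>v vec t y = 0\<^sub>v t"
    proof (rule eq_vecI)
      fix i assume "i < dim_vec (0\<^sub>v t :: 'a vec)"
      then have "i < t" by simp
      then have "(square_mat t M *\<^sub>v vec t y) $ i = (\<Sum>p<t. M i p * y p)"
        using square_mat_mult_vec[of i t "vec t y" M] by (auto intro: sum.cong)
      then show "(square_mat t M *\<^sub>v vec t y) $ i = 0\<^sub>v t $ i"
        using y(2) \<open>i < t\<close> by simp
    qed (simp add: square_mat_def)
    ultimately show "\<exists>v. v \<in> carrier_vec t \<and> v \<noteq> 0\<^sub>v t \<and> square_mat t M *\<^sub>v v = 0\<^sub>v t"
      by (intro exI[of _ "vec t y"]) simp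
  qed
  finally show ?thesis .
qed

lemma det_square_mat_transpose: "det (square_mat t (\<lambda>i p. M p i)) = det (square_mat t M)"
proof -
  have "square_mat t (\<lambda>i p. M p i) = transpose_mat (square_mat t M)"
    by (intro eq_matI) (auto simp: square_mat_def)
  then show ?thesis using det_transpose[OF square_mat_carrier] by simp
qed

lemma nontrivial_solution_if_zero_row:
  fixes M :: "nat \<Rightarrow> nat \<Rightarrow> 'a::field"
  assumes "i0 < t" and "\<And>p. p < t \<Longrightarrow> M i0 p = 0"
  shows "\<exists>y. (\<exists>p<t. y p \<noteq> 0) \<and> (\<forall>i<t. (\<Sum>p<t. M i p * y p) = 0)"
proof -
  have "square_mat t M = mat\<^sub>r t t (\<lambda>i. if i = i0 then 0\<^sub>v t else vec t (M i))"
    using assms(2) by (intro eq_matI) (auto simp: square_mat_def)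
  moreover have "det (mat\<^sub>r t t (\<lambda>i. if i = i0 then 0\<^sub>v t else vec t (M i))) = 0"
    by (rule det_row_0[OF assms(1)]) auto
  ultimately show ?thesis using det_square_mat_eq_0_iff by metis
qed

lemma solvable_if_det_nonzero:
  fixes M :: "nat \<Rightarrow> nat \<Rightarrow> 'a::field"
  assumes "det (square_mat t M) \<noteq> 0"
  shows "\<exists>y. \<forall>i<t. (\<Sum>p<t. M i p * y p) = w i"
proof -
  have "square_mat t M \<in> Units (ring_mat TYPE('a) t undefined)"
    by (rule det_non_zero_imp_unit[OF square_mat_carrier assms])
  then obtain B where B: "B \<in> carrier_mat t t" "square_mat t M * B = 1\<^sub>m t"
    unfolding Units_def by (auto simp: ring_mat_simps)
  define v where "v = B *\<^sub>v vec t w"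
  have "square_mat t M *\<^sub>v v = vec t w"
    unfolding v_def using B by (simp flip: assoc_mult_mat_vec[OF square_mat_carrier B(1)])
  then have "\<forall>i<t. (\<Sum>p<t. M i p * v $ p) = w i"
    using square_mat_mult_vec[of _ t v M] B(1) by (metis carrier_vecI dim_mult_mat_vec index_vec
        carrier_matD(1) v_def)
  then show ?thesis by blast
qed

lemma mat_of_cols_mult_vec_index:
  assumes "set as \<subseteq> carrier_vec n" "v \<in> carrier_vec (length as)" "l < n"
  shows "(mat_of_cols n as *\<^sub>v v) $ l = (\<Sum>i<length as. as ! i $ l * v $ i)"
  using assms by (simp add: scalar_prod_def row_def mat_of_cols_index atLeast0LessThan)

lemma (in vec_space) lin_indpt_if_mat_of_cols_kernel_trivial:
  assumes "set as \<subseteq> carrier_vec n" "distinct as"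
    and trivial: "\<And>v. v \<in> carrier_vec (length as) \<Longrightarrow>
      (\<forall>l<n. (\<Sum>i<length as. as ! i $ l * v $ i) = 0) \<Longrightarrow> v = 0\<^sub>v (length as)"
  shows "lin_indpt (set as)"
proof
  assume "lin_dep (set as)"
  moreover have cols: "cols (mat_of_cols n as) = as" using assms(1) by simp
  ultimately have "lin_dep (set (cols (mat_of_cols n as)))" by simp
  from lin_depE[OF mat_of_cols_carrier(1) this] obtain v where v: "v \<in> carrier_vec (length as)"
    "v \<noteq> 0\<^sub>v (length as)" "mat_of_cols n as *\<^sub>v v = 0\<^sub>v n"
    using cols assms(2) by auto
  have "\<forall>l<n. (\<Sum>i<length as. as ! i $ l * v $ i) = 0"
    using v(3) mat_of_cols_mult_vec_index[OF assms(1) v(1)] by (metis index_zero_vec(1))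
  then show False using trivial v(1,2) by blast
qed

lemma rank_ge_1_if_entry_nonzero:
  fixes D :: "'a::field mat"
  assumes D: "D \<in> carrier_mat k c" and "l0 < k" "j < c" "D $$ (l0, j) \<noteq> 0"
  shows "1 \<le> vec_space.rank k D"
proof -
  interpret vec_space "TYPE('a)" k .
  have "lin_indpt (set [col D j])"
  proof (rule lin_indpt_if_mat_of_cols_kernel_trivial)
    fix v :: "'a vec" assume v: "v \<in> carrier_vec (length [col D j])"
      and ker: "\<forall>l<k. (\<Sum>i<length [col D j]. [col D j] ! i $ l * v $ i) = 0"
    have "v $ 0 = 0" using ker[rule_format, OF \<open>l0 < k\<close>] assms by simp
    then show "v = 0\<^sub>v (length [col D j])"
      using v by (intro eq_vecI) auto
  qed (use D in auto)
  moreover have "set [col D j] \<subseteq> set (cols D)"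
    using D \<open>j < c\<close> by (auto simp: in_set_conv_nth)
  ultimately show ?thesis
    using rank_ge_card_indpt[OF D, of "set [col D j]"] by simp
qed

text \<open>Two non-proportional columns would be linearly independent.\<close>
lemma rank_le_1_imp_product_entries:
  fixes D :: "'a::field mat"
  assumes D: "D \<in> carrier_mat k c" and rank: "vec_space.rank k D \<le> 1"
  obtains f h where "\<And>l j. l < k \<Longrightarrow> j < c \<Longrightarrow> D $$ (l, j) = f l * h j"
proof (cases "\<forall>l<k. \<forall>j<c. D $$ (l, j) = 0")
  case True
  then show thesis using that[of "\<lambda>_. 0"] by simp
next
  case False
  then obtain l0 j0 where j0: "l0 < k" "j0 < c" "D $$ (l0, j0) \<noteq> 0" by blast
  interpret vec_space "TYPE('a)" k .
  have proportional: "\<exists>r. \<forall>l<k. D $$ (l, j) = r * D $$ (l, j0)" if "j < c" for j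
  proof (rule ccontr)
    assume not_prop: "\<nexists>r. \<forall>l<k. D $$ (l, j) = r * D $$ (l, j0)"
    then have distinct: "col D j0 \<noteq> col D j"
      using D j0(2) that by (metis carrier_matD(1) col_def index_vec mult_1)
    have "lin_indpt (set [col D j0, col D j])"
    proof (rule lin_indpt_if_mat_of_cols_kernel_trivial)
      fix v :: "'a vec" assume v: "v \<in> carrier_vec (length [col D j0, col D j])"
        and ker: "\<forall>l<k. (\<Sum>i<length [col D j0, col D j]. [col D j0, col D j] ! i $ l * v $ i) = 0"
      have eq: "D $$ (l, j0) * v $ 0 + D $$ (l, j) * v $ 1 = 0" if "l < k" for l
        using ker that D j0(2) \<open>j < c\<close> by (simp add: numeral_2_eq_2)
      have "v $ 1 = 0"
      proof (rule ccontr)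
        assume "v $ 1 \<noteq> 0"
        then have "\<forall>l<k. D $$ (l, j) = (- v $ 0 / v $ 1) * D $$ (l, j0)"
          using eq by (auto simp: field_simps eq_neg_iff_add_eq_0 add.commute)
        then show False using not_prop by blast
      qed
      moreover have "v $ 0 = 0" using eq[OF j0(1)] j0(3) \<open>v $ 1 = 0\<close> by simp
      ultimately show "v = 0\<^sub>v (length [col D j0, col D j])"
        using v by (intro eq_vecI) (auto simp: less_Suc_eq)
    qed (use D distinct in auto)
    moreover have "set [col D j0, col D j] \<subseteq> set (cols D)"
      using D j0(2) \<open>j < c\<close> by (auto simp: in_set_conv_nth)
    ultimately have "2 \<le> rank D"
      using rank_ge_card_indpt[OF D, of "set [col D j0, col D j]"] distinct by simp
    then show False using rank by simp
  qed
  obtain r where "\<forall>j<c. \<forall>l<k. D $$ (l, j) = r j * D $$ (l, j0)"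
    using proportional by metis
  then show thesis using that[of "\<lambda>l. D $$ (l, j0)" r] by (simp add: mult.commute)
qed

section \<open>\<open>F_q\<close>-spans and Moore matrices\<close>

context frobenius_field
begin

definition Fq_span :: "(nat \<Rightarrow> 'a) \<Rightarrow> nat set \<Rightarrow> 'a set" where
  "Fq_span w L = {\<Sum>l\<in>L. c l * w l | c. \<forall>l\<in>L. c l \<in> Fq}"

lemma Fq_spanI: "(\<And>l. l \<in> L \<Longrightarrow> c l \<in> Fq) \<Longrightarrow> (\<Sum>l\<in>L. c l * w l) \<in> Fq_span w L"
  unfolding Fq_span_def by blast

lemma Fq_spanE:
  assumes "x \<in> Fq_span w L"
  obtains c where "\<forall>l\<in>L. c l \<in> Fq" and "x = (\<Sum>l\<in>L. c l * w l)"
  using assms unfolding Fq_span_def by blast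

lemma Fq_span_add:
  assumes "x \<in> Fq_span w L" "y \<in> Fq_span w L"
  shows "x + y \<in> Fq_span w L"
proof -
  obtain c where c: "\<forall>l\<in>L. c l \<in> Fq" "x = (\<Sum>l\<in>L. c l * w l)"
    using assms(1) by (rule Fq_spanE)
  obtain d where d: "\<forall>l\<in>L. d l \<in> Fq" "y = (\<Sum>l\<in>L. d l * w l)"
    using assms(2) by (rule Fq_spanE)
  have "x + y = (\<Sum>l\<in>L. (c l + d l) * w l)"
    by (simp add: c(2) d(2) sum.distrib distrib_right)
  then show ?thesis
    using Fq_spanI[of L "\<lambda>l. c l + d l" w] c(1) d(1) by (simp add: subfield_q_add)
qed

lemma Fq_span_scale:
  assumes "a \<in> Fq" "x \<in> Fq_span w L"
  shows "a * x \<in> Fq_span w L"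
proof -
  obtain c where c: "\<forall>l\<in>L. c l \<in> Fq" "x = (\<Sum>l\<in>L. c l * w l)"
    using assms(2) by (rule Fq_spanE)
  have "a * x = (\<Sum>l\<in>L. (a * c l) * w l)"
    by (simp add: c(2) sum_distrib_left mult.assoc)
  then show ?thesis
    using Fq_spanI[of L "\<lambda>l. a * c l" w] c(1) assms(1) by (simp add: subfield_q_mult)
qed

lemma Fq_span_0: "0 \<in> Fq_span w L"
  using Fq_spanI[of L "\<lambda>_. 0" w] by simp

lemma Fq_span_Fq_lincomb:
  assumes "\<forall>j\<in>J. c j \<in> Fq" "\<forall>j\<in>J. u j \<in> Fq_span w L"
  shows "(\<Sum>j\<in>J. c j * u j) \<in> Fq_span w L"
  using assms
proof (induction J rule: infinite_finite_induct)
  case (insert j J)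
  have "c j * u j \<in> Fq_span w L"
    using insert.prems by (intro Fq_span_scale) auto
  moreover have "(\<Sum>j\<in>J. c j * u j) \<in> Fq_span w L"
    using insert.IH insert.prems by simp
  ultimately show ?case
    using insert.hyps Fq_span_add by simp
qed (simp_all add: Fq_span_0)

lemma Fq_span_eq_image: "Fq_span w L = (\<lambda>c. \<Sum>l\<in>L. c l * w l) ` PiE L (\<lambda>_. Fq)"
proof
  show "Fq_span w L \<subseteq> (\<lambda>c. \<Sum>l\<in>L. c l * w l) ` PiE L (\<lambda>_. Fq)"
  proof
    fix x assume "x \<in> Fq_span w L"
    then obtain c where c: "\<forall>l\<in>L. c l \<in> Fq" "x = (\<Sum>l\<in>L. c l * w l)"
      by (rule Fq_spanE)
    have "x = (\<Sum>l\<in>L. restrict c L l * w l)"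
      unfolding c(2) by (intro sum.cong) auto
    moreover have "restrict c L \<in> PiE L (\<lambda>_. Fq)" using c(1) by simp
    ultimately show "x \<in> (\<lambda>c. \<Sum>l\<in>L. c l * w l) ` PiE L (\<lambda>_. Fq)" by blast
  qed
qed (auto intro!: Fq_spanI)

lemma Fq_span_member:
  assumes "finite L" "j \<in> L"
  shows "w j \<in> Fq_span w L"
  using Fq_spanI[of L "\<lambda>l. if l = j then 1 else 0" w] assms by (simp add: sum_delta_mult)

lemma Fq_span_remove_zeros:
  assumes "x \<in> Fq_span w L" "finite L" "\<And>l. l \<in> Z \<Longrightarrow> w l = 0"
  shows "x \<in> Fq_span w (L - Z)"
proof -
  obtain c where c: "\<forall>l\<in>L. c l \<in> Fq" "x = (\<Sum>l\<in>L. c l * w l)"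
    using assms(1) by (rule Fq_spanE)
  have "x = (\<Sum>l\<in>L - Z. c l * w l)"
    unfolding c(2) using assms(2,3) by (intro sum.mono_neutral_right) auto
  then show ?thesis using c(1) Fq_spanI[of "L - Z" c w] by simp
qed

lemma Fq_span_theta_lincomb:
  assumes "g j \<in> Fq_span g J"
  shows "(\<Sum>i\<in>I. u i * theta i (g j)) \<in> Fq_span (\<lambda>l. \<Sum>i\<in>I. u i * theta i (g l)) J"
proof -
  obtain c where c: "\<forall>l\<in>J. c l \<in> Fq" "g j = (\<Sum>l\<in>J. c l * g l)"
    using assms by (rule Fq_spanE)
  have "(\<Sum>i\<in>I. u i * theta i (g j)) = (\<Sum>i\<in>I. \<Sum>l\<in>J. c l * (u i * theta i (g l)))"
    unfolding c(2) using theta_Fq_lincomb[of J c] c(1) by (simp add: sum_distrib_left mult.left_commute)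
  also have "\<dots> = (\<Sum>l\<in>J. c l * (\<Sum>i\<in>I. u i * theta i (g l)))"
    by (subst sum.swap) (simp add: sum_distrib_left)
  finally show ?thesis using c(1) Fq_spanI by simp
qed

lemma Fq_lin_indep_subset:
  fixes b :: "nat \<Rightarrow> 'a"
  assumes "Fq_lin_indep q b J" "J' \<subseteq> J" "finite J"
  shows "Fq_lin_indep q b J'"
  unfolding Fq_lin_indep_def
proof (intro allI impI ballI)
  fix c j assume c: "\<forall>j\<in>J'. c j \<in> Fq" and zero: "(\<Sum>j\<in>J'. c j * b j) = 0" and j: "j \<in> J'"
  define c' where "c' j = (if j \<in> J' then c j else 0)" for j
  have "(\<Sum>j\<in>J. c' j * b j) = (\<Sum>j\<in>J'. c j * b j)"
    using assms(2,3) by (intro sum.mono_neutral_cong_right) (auto simp: c'_def)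
  moreover have "\<And>j. j \<in> J \<Longrightarrow> c' j \<in> Fq" using c by (simp add: c'_def)
  ultimately have "c' j = 0"
    using Fq_lin_indepD[OF assms(1), of c' j] zero assms(2) j by auto
  then show "c j = 0" using j by (simp add: c'_def)
qed

lemma Fq_span_if_not_Fq_lin_indep_insert:
  fixes g :: "nat \<Rightarrow> 'a"
  assumes indep: "Fq_lin_indep q g J" and "finite J" "j \<notin> J"
    and dep: "\<not> Fq_lin_indep q g (insert j J)"
  shows "g j \<in> Fq_span g J"
proof -
  obtain c where c: "\<forall>l\<in>insert j J. c l \<in> Fq" "(\<Sum>l\<in>insert j J. c l * g l) = 0"
    "\<exists>l\<in>insert j J. c l \<noteq> 0"
    using dep unfolding Fq_lin_indep_def by blast
  have sum_eq: "c j * g j + (\<Sum>l\<in>J. c l * g l) = 0"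
    using c(2) assms(2,3) by simp
  have "c j \<noteq> 0"
  proof
    assume "c j = 0"
    then have "(\<Sum>l\<in>J. c l * g l) = 0" using sum_eq by simp
    then have "\<forall>l\<in>J. c l = 0" using Fq_lin_indepD[OF indep, of c] c(1) by blast
    then show False using c(3) \<open>c j = 0\<close> by blast
  qed
  moreover have "c j * g j = - (\<Sum>l\<in>J. c l * g l)"
    using sum_eq by (simp add: eq_neg_iff_add_eq_0)
  ultimately have "g j = - (\<Sum>l\<in>J. c l * g l) / c j"
    by (metis nonzero_mult_div_cancel_left)
  also have "\<dots> = (\<Sum>l\<in>J. (- c l / c j) * g l)"
    by (simp add: sum_divide_distrib sum_negf)
  finally have "g j = (\<Sum>l\<in>J. (- c l / c j) * g l)" .
  then show ?thesis
    using c(1) Fq_spanI[of J "\<lambda>l. - c l / c j" g]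
    by (simp add: subfield_q_divide subfield_q_minus)
qed

lemma maximal_Fq_lin_indep_subset:
  fixes g :: "nat \<Rightarrow> 'a"
  assumes "finite I"
  obtains J where "J \<subseteq> I" "Fq_lin_indep q g J" "\<And>j. j \<in> I \<Longrightarrow> g j \<in> Fq_span g J"
proof -
  define S where "S = {J. J \<subseteq> I \<and> Fq_lin_indep q g J}"
  have "finite S" unfolding S_def using assms by simp
  moreover have "{} \<in> S" by (simp add: S_def Fq_lin_indep_def)
  ultimately obtain J where J: "J \<in> S" "card J = Max (card ` S)"
    using Max_in[of "card ` S"] by fastforce
  have J_max: "card J' \<le> card J" if "J' \<in> S" for J'
    using J(2) Max_ge[of "card ` S"] \<open>finite S\<close> that by simp
  have "finite J" using J assms finite_subset by (auto simp: S_def)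
  have "g j \<in> Fq_span g J" if "j \<in> I" for j
  proof (cases "j \<in> J")
    case True
    then show ?thesis using Fq_span_member \<open>finite J\<close> by blast
  next
    case False
    then have "insert j J \<notin> S" using J_max[of "insert j J"] \<open>finite J\<close> by auto
    then have "\<not> Fq_lin_indep q g (insert j J)" using J that by (auto simp: S_def)
    then show ?thesis
      using Fq_span_if_not_Fq_lin_indep_insert J \<open>finite J\<close> False by (auto simp: S_def)
  qed
  then show thesis using that J by (auto simp: S_def)
qed

text \<open>Different \<open>F_q\<close>-combinations of an independent family take different values, so
  \<open>|F_q|^|J| \<le> |Fq_span w L| \<le> |F_q|^|L|\<close>.\<close>
lemma card_le_if_Fq_lin_indep_in_Fq_span:
  fixes u w :: "nat \<Rightarrow> 'a"
  assumes "finite L" "finite J" and indep: "Fq_lin_indep q u J"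
    and span: "\<And>j. j \<in> J \<Longrightarrow> u j \<in> Fq_span w L"
  shows "card J \<le> card L"
proof -
  have "inj_on (\<lambda>c. \<Sum>j\<in>J. c j * u j) (PiE J (\<lambda>_. Fq))"
  proof (rule inj_onI)
    fix c c' assume c: "c \<in> PiE J (\<lambda>_. Fq)" and c': "c' \<in> PiE J (\<lambda>_. Fq)"
      and eq: "(\<Sum>j\<in>J. c j * u j) = (\<Sum>j\<in>J. c' j * u j)"
    have "(\<Sum>j\<in>J. (c j - c' j) * u j) = 0"
      using eq by (simp add: left_diff_distrib sum_subtractf)
    then have "\<forall>j\<in>J. c j - c' j = 0"
      using Fq_lin_indepD[OF indep, of "\<lambda>j. c j - c' j"] c c'
      by (auto intro: subfield_q_diff)
    then show "c = c'" using c c' by (intro PiE_ext) auto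
  qed
  then have "card Fq ^ card J = card ((\<lambda>c. \<Sum>j\<in>J. c j * u j) ` PiE J (\<lambda>_. Fq))"
    using assms(2) by (simp add: card_image card_PiE)
  also have "\<dots> \<le> card (Fq_span w L)"
    using span by (intro card_mono) (auto intro!: Fq_span_Fq_lincomb)
  also have "\<dots> \<le> card (PiE L (\<lambda>_. Fq))"
    unfolding Fq_span_eq_image by (rule card_image_le) (simp add: finite_PiE assms(1))
  also have "\<dots> = card Fq ^ card L"
    using assms(1) by (simp add: card_PiE)
  finally show ?thesis
    using card_subfield_q_ge_2 by (simp add: power_le_imp_le_exp)
qed

lemma rank_q_le_card_if_Fq_span:
  assumes "finite L" "\<And>j. j < dim_vec v \<Longrightarrow> v $ j \<in> Fq_span w L"
  shows "rank_q q v \<le> card L"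
proof -
  let ?S = "{card J |J. J \<subseteq> {0..<dim_vec v} \<and> Fq_lin_indep q (\<lambda>j. v $ j) J}"
  have "finite ?S"
    by (rule finite_subset[of _ "card ` Pow {0..<dim_vec v}"]) auto
  moreover have "?S \<noteq> {}"
    by (auto simp: Fq_lin_indep_def intro!: exI[of _ "{}"])
  moreover have "\<forall>r\<in>?S. r \<le> card L"
  proof
    fix r assume "r \<in> ?S"
    then obtain J where J: "r = card J" "J \<subseteq> {0..<dim_vec v}" "Fq_lin_indep q (\<lambda>j. v $ j) J"
      by blast
    have "v $ j \<in> Fq_span w L" if "j \<in> J" for j
      using that J(2) by (intro assms(2)) auto
    then have "card J \<le> card L"
      using card_le_if_Fq_lin_indep_in_Fq_span[where w = w, OF assms(1) finite_subset[OF J(2)] J(3)]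
      by blast
    then show "r \<le> card L" using J(1) by simp
  qed
  ultimately show ?thesis
    unfolding rank_q_def by simp
qed

lemma Fq_lin_indep_theta:
  fixes b :: "nat \<Rightarrow> 'a"
  assumes "Fq_lin_indep q b K"
  shows "Fq_lin_indep q (\<lambda>j. theta 1 (b j)) K"
  unfolding Fq_lin_indep_def
proof (intro allI impI)
  fix c assume c: "\<forall>j\<in>K. c j \<in> Fq" and zero: "(\<Sum>j\<in>K. c j * theta 1 (b j)) = 0"
  have "theta 1 (\<Sum>j\<in>K. c j * b j) = 0"
    using zero c by (simp add: theta_Fq_lincomb)
  then show "\<forall>j\<in>K. c j = 0"
    using assms c unfolding Fq_lin_indep_def by simp
qed

lemma theta_lincomb_difference:
  assumes "\<And>i. i < Suc t \<Longrightarrow> (\<Sum>j\<in>K. y j * theta i (b j)) = 0" "i < t"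
  shows "(\<Sum>j\<in>K. (y j - theta 1 (y j)) * theta i (theta 1 (b j))) = 0"
proof -
  have "(\<Sum>j\<in>K. (y j - theta 1 (y j)) * theta i (theta 1 (b j)))
      = (\<Sum>j\<in>K. y j * theta (Suc i) (b j)) - theta 1 (\<Sum>j\<in>K. y j * theta i (b j))"
    by (simp add: theta_sum theta_mult theta_theta left_diff_distrib sum_subtractf)
  also have "\<dots> = 0" using assms by simp
  finally show ?thesis .
qed

text \<open>After scaling a solution \<open>y\<close> to \<open>y j0 = 1\<close>,
  subtracting \<open>theta 1\<close> of the \<open>i\<close>-th equation from the \<open>(i+1)\<close>-th cancels \<open>j0\<close>; induction on
  \<open>theta 1 \<circ> b\<close> over \<open>K - {j0}\<close> shows that \<open>y\<close> is fixed by \<open>theta 1\<close>, i.e. \<open>F_q\<close>-valued.\<close>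
lemma moore_lincomb_eq_0:
  fixes b y :: "nat \<Rightarrow> 'a"
  assumes "finite K" "Fq_lin_indep q b K" "card K \<le> t"
    and "\<And>i. i < t \<Longrightarrow> (\<Sum>j\<in>K. y j * theta i (b j)) = 0"
  shows "\<forall>j\<in>K. y j = 0"
  using assms
proof (induction t arbitrary: K b y)
  case 0
  then show ?case by simp
next
  case (Suc t)
  show ?case
  proof (rule ccontr)
    assume "\<not> (\<forall>j\<in>K. y j = 0)"
    then obtain j0 where j0: "j0 \<in> K" "y j0 \<noteq> 0" by blast
    define y' where "y' j = y j / y j0" for j
    have "y' j0 = 1" using j0 by (simp add: y'_def)
    have eq: "(\<Sum>j\<in>K. y' j * theta i (b j)) = 0" if "i < Suc t" for i
    proof -
      have "(\<Sum>j\<in>K. y' j * theta i (b j)) = (\<Sum>j\<in>K. y j * theta i (b j)) / y j0"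
        by (simp add: y'_def sum_divide_distrib)
      then show ?thesis using Suc.prems(4)[OF that] by simp
    qed
    let ?K = "K - {j0}"
    have indep': "Fq_lin_indep q (\<lambda>j. theta 1 (b j)) ?K"
      by (rule Fq_lin_indep_theta[OF Fq_lin_indep_subset[OF Suc.prems(2) Diff_subset Suc.prems(1)]])
    have card': "card ?K \<le> t" using Suc.prems(1,3) j0(1) by simp
    have eq': "(\<Sum>j\<in>?K. (y' j - theta 1 (y' j)) * theta i (theta 1 (b j))) = 0" if "i < t" for i
    proof -
      have "(\<Sum>j\<in>?K. (y' j - theta 1 (y' j)) * theta i (theta 1 (b j)))
          = (\<Sum>j\<in>K. (y' j - theta 1 (y' j)) * theta i (theta 1 (b j)))"
        using Suc.prems(1) j0(1) \<open>y' j0 = 1\<close> by (intro sum.mono_neutral_left) auto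
      then show ?thesis using theta_lincomb_difference[OF eq that] by simp
    qed
    have fixed: "\<forall>j\<in>?K. y' j - theta 1 (y' j) = 0"
      using Suc.IH[OF _ indep' card' eq'] Suc.prems(1) by blast
    have "\<forall>j\<in>K. y' j \<in> Fq"
    proof
      fix j assume "j \<in> K"
      show "y' j \<in> Fq"
      proof (cases "j = j0")
        case False
        then have "theta 1 (y' j) = y' j" using fixed \<open>j \<in> K\<close> by simp
        then show ?thesis by (rule theta_fixed_imp_subfield_q)
      qed (simp add: \<open>y' j0 = 1\<close>)
    qed
    moreover have "(\<Sum>j\<in>K. y' j * b j) = 0" using eq[of 0] by simp
    ultimately have "y' j0 = 0"
      using Fq_lin_indepD[OF Suc.prems(2)] j0(1) by blast
    then show False using \<open>y' j0 = 1\<close> by simp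
  qed
qed

lemma det_moore_matrix_nonzero:
  fixes b :: "nat \<Rightarrow> 'a"
  assumes "finite K" "Fq_lin_indep q b K" and \<kappa>: "bij_betw \<kappa> {..<card K} K"
  shows "det (square_mat (card K) (\<lambda>i p. theta i (b (\<kappa> p)))) \<noteq> 0"
proof
  let ?t = "card K"
  assume "det (square_mat ?t (\<lambda>i p. theta i (b (\<kappa> p)))) = 0"
  then obtain y where y: "\<exists>p<?t. y p \<noteq> 0" "\<forall>i<?t. (\<Sum>p<?t. theta i (b (\<kappa> p)) * y p) = 0"
    using det_square_mat_eq_0_iff[of ?t "\<lambda>i p. theta i (b (\<kappa> p))"] by blast
  define y' where "y' = y \<circ> inv_into {..<?t} \<kappa>"
  have y'_\<kappa>: "y' (\<kappa> p) = y p" if "p < ?t" for p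
    using \<kappa> that by (simp add: y'_def bij_betw_inv_into_left)
  have "(\<Sum>j\<in>K. y' j * theta i (b j)) = 0" if "i < ?t" for i
  proof -
    have "(\<Sum>j\<in>K. y' j * theta i (b j)) = (\<Sum>p<?t. y' (\<kappa> p) * theta i (b (\<kappa> p)))"
      by (rule sum.reindex_bij_betw[symmetric, OF \<kappa>])
    also have "\<dots> = (\<Sum>p<?t. theta i (b (\<kappa> p)) * y p)"
      using y'_\<kappa> by (intro sum.cong) (simp_all add: mult.commute)
    also have "\<dots> = 0" using y(2) that by simp
    finally show ?thesis .
  qed
  then have "\<forall>j\<in>K. y' j = 0"
    using moore_lincomb_eq_0[OF assms(1,2)] by blast
  moreover obtain p where "p < ?t" "y p \<noteq> 0" using y(1) by blast
  moreover have "\<kappa> p \<in> K" using bij_betwE[OF \<kappa>] \<open>p < ?t\<close> by blast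
  ultimately show False using y'_\<kappa>[of p] by simp
qed

lemma moore_interpolation:
  fixes b w :: "nat \<Rightarrow> 'a"
  assumes "finite K" "Fq_lin_indep q b K"
  obtains u where "\<And>j. j \<in> K \<Longrightarrow> (\<Sum>i<card K. u i * theta i (b j)) = w j"
proof -
  let ?t = "card K"
  obtain \<kappa> where \<kappa>: "bij_betw \<kappa> {..<?t} K"
    using ex_bij_betw_nat_finite[OF assms(1)] by (auto simp: atLeast0LessThan)
  have "det (square_mat ?t (\<lambda>p i. theta i (b (\<kappa> p)))) \<noteq> 0"
    using det_moore_matrix_nonzero[OF assms \<kappa>]
      det_square_mat_transpose[of ?t "\<lambda>i p. theta i (b (\<kappa> p))"] by simp
  then obtain u where u: "\<forall>p<?t. (\<Sum>i<?t. theta i (b (\<kappa> p)) * u i) = w (\<kappa> p)"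
    using solvable_if_det_nonzero[of ?t "\<lambda>p i. theta i (b (\<kappa> p))" "\<lambda>p. w (\<kappa> p)"] by blast
  have "(\<Sum>i<?t. u i * theta i (b j)) = w j" if "j \<in> K" for j
  proof -
    have "j \<in> \<kappa> ` {..<?t}" using that bij_betw_imp_surj_on[OF \<kappa>] by simp
    then obtain p where "p < ?t" "j = \<kappa> p" by auto
    then show ?thesis using u by (simp add: mult.commute)
  qed
  then show thesis by (rule that)
qed

lemma exists_moore_inverse:
  fixes g :: "nat \<Rightarrow> 'a"
  assumes "Fq_lin_indep q g {0..<k}"
  obtains C where "\<And>r l. l < k \<Longrightarrow> (\<Sum>i<k. C r i * theta i (g l)) = (if l = r then 1 else 0)"
proof -
  have "\<exists>c. \<forall>l\<in>{0..<k}. (\<Sum>i<k. c i * theta i (g l)) = (if l = r then 1 else 0)" for r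
  proof -
    obtain c where "\<And>l. l \<in> {0..<k} \<Longrightarrow> (\<Sum>i<card {0..<k}. c i * theta i (g l)) = (if l = r then 1 else 0)"
      using moore_interpolation[OF finite_atLeastLessThan assms,
          where w = "\<lambda>l. if l = r then 1 else 0"] by blast
    then show ?thesis by (intro exI[of _ c]) simp
  qed
  then obtain C where "\<forall>r. \<forall>l\<in>{0..<k}. (\<Sum>i<k. C r i * theta i (g l)) = (if l = r then 1 else 0)"
    by metis
  then show thesis using that[of C] by simp
qed

lemma row_space_gab_mat:
  "row_space (gab_mat q s k n g) = {vec n (\<lambda>j. \<Sum>i<k. c i * theta i (g j)) | c. True}"
proof -
  have "vec n (\<lambda>j. \<Sum>i<k. c i * gab_mat q s k n g $$ (i, j)) = vec n (\<lambda>j. \<Sum>i<k. c i * theta i (g j))"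
    for c by (intro eq_vecI) (auto simp: gab_mat_def theta_def)
  then show ?thesis unfolding row_space_def by (auto simp: gab_mat_def)
qed

lemma exists_nonzero_orthogonal_to_theta_powers:
  fixes f :: "nat \<Rightarrow> 'a"
  assumes "1 \<le> k"
  obtains a where "\<exists>l<k. a l \<noteq> 0" "\<And>i. 0 < i \<Longrightarrow> i < k \<Longrightarrow> (\<Sum>l<k. theta i (a l) * f l) = 0"
proof -
  define M where "M i l = (if i = 0 then 0 else f l ^ (q ^ (s * i * (m - 1))))" for i l
  obtain a where a: "\<exists>l<k. a l \<noteq> 0" "\<forall>i<k. (\<Sum>l<k. M i l * a l) = 0"
    using nontrivial_solution_if_zero_row[of 0 k M] assms by (auto simp: M_def)
  have "(\<Sum>l<k. theta i (a l) * f l) = 0" if "0 < i" "i < k" for i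
  proof -
    have "(\<Sum>l<k. theta i (a l) * f l) = theta i (\<Sum>l<k. f l ^ (q ^ (s * i * (m - 1))) * a l)"
      unfolding theta_sum theta_mult theta_inverse by (simp only: mult.commute)
    also have "\<dots> = 0"
      using a(2)[rule_format, of i] that by (simp add: M_def)
    finally show ?thesis .
  qed
  with a(1) show thesis using that by blast
qed

lemma rank_q_theta_lincomb_le:
  assumes "finite J" "\<And>j. j < n \<Longrightarrow> g j \<in> Fq_span g J"
    and "\<And>l. l \<in> Z \<Longrightarrow> (\<Sum>i\<in>I. u i * theta i (g l)) = 0"
  shows "rank_q q (vec n (\<lambda>j. \<Sum>i\<in>I. u i * theta i (g j))) \<le> card (J - Z)"
proof (rule rank_q_le_card_if_Fq_span)
  fix j assume "j < dim_vec (vec n (\<lambda>j. \<Sum>i\<in>I. u i * theta i (g j)))"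
  then have "(\<Sum>i\<in>I. u i * theta i (g j)) \<in> Fq_span (\<lambda>l. \<Sum>i\<in>I. u i * theta i (g l)) J"
    using assms(2) Fq_span_theta_lincomb by simp
  then show "vec n (\<lambda>j. \<Sum>i\<in>I. u i * theta i (g j)) $ j
      \<in> Fq_span (\<lambda>l. \<Sum>i\<in>I. u i * theta i (g l)) (J - Z)"
    using Fq_span_remove_zeros assms(1,3) \<open>j < _\<close> by simp
qed (use assms(1) in simp)

end

section \<open>Systematic MRD codes\<close>

locale systematic_MRD_code = frobenius_field field q m s
  for field :: "'a::{field,finite} itself" and q m s :: nat +
  fixes k n :: nat and X :: "'a mat"
  assumes k_ge_1: "1 \<le> k" and k_less_n: "k < n"
    and X_carrier: "X \<in> carrier_mat k (n - k)"
    and MRD: "min_rank_dist q (row_space (sys_gen k n X)) = n - k + 1"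
begin

abbreviation code :: "'a vec set" where
  "code \<equiv> row_space (sys_gen k n X)"

definition encode :: "(nat \<Rightarrow> 'a) \<Rightarrow> 'a vec" where
  "encode a = vec n (\<lambda>j. if j < k then a j else (\<Sum>l<k. a l * X $$ (l, j - k)))"

lemma dim_encode [simp]: "dim_vec (encode a) = n"
  by (simp add: encode_def)

lemma encode_index_prefix [simp]: "l < k \<Longrightarrow> encode a $ l = a l"
  using k_less_n by (simp add: encode_def)

lemma encode_index_suffix: "j < n - k \<Longrightarrow> encode a $ (k + j) = (\<Sum>l<k. a l * X $$ (l, j))"
  by (simp add: encode_def)

lemma encode_cong: "(\<And>l. l < k \<Longrightarrow> a l = b l) \<Longrightarrow> encode a = encode b"
  unfolding encode_def by (intro eq_vecI) auto

lemma code_eq_range_encode: "code = range encode"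
proof -
  have "vec n (\<lambda>j. \<Sum>i<k. c i * sys_gen k n X $$ (i, j)) = encode c" for c
  proof (rule eq_vecI)
    fix j assume "j < dim_vec (encode c)"
    then have "j < n" by simp
    show "vec n (\<lambda>j. \<Sum>i<k. c i * sys_gen k n X $$ (i, j)) $ j = encode c $ j"
    proof (cases "j < k")
      case True
      have "(\<Sum>i<k. c i * sys_gen k n X $$ (i, j)) = (\<Sum>i<k. if i = j then c i else 0)"
        using \<open>j < n\<close> True by (intro sum.cong) (auto simp: sys_gen_def)
      then show ?thesis using \<open>j < n\<close> True by (simp add: encode_def)
    next
      case False
      have "(\<Sum>i<k. c i * sys_gen k n X $$ (i, j)) = (\<Sum>l<k. c l * X $$ (l, j - k))"
        using \<open>j < n\<close> False by (intro sum.cong) (auto simp: sys_gen_def)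
      then show ?thesis using \<open>j < n\<close> False by (simp add: encode_def)
    qed
  qed simp
  then show ?thesis unfolding row_space_def by (auto simp: sys_gen_def)
qed

lemma mem_code_imp_eq_encode: "v \<in> code \<Longrightarrow> v = encode (\<lambda>l. v $ l)"
  unfolding code_eq_range_encode by (auto intro: encode_cong)

lemma code_lincomb:
  assumes "\<And>i. i \<in> I \<Longrightarrow> vec n (w i) \<in> code"
  shows "vec n (\<lambda>j. \<Sum>i\<in>I. u i * w i j) \<in> code"
proof -
  have suffix: "w i (k + j) = (\<Sum>l<k. w i l * X $$ (l, j))" if "i \<in> I" "j < n - k" for i j
  proof -
    have "w i (k + j) = encode (\<lambda>l. vec n (w i) $ l) $ (k + j)"
      using mem_code_imp_eq_encode[OF assms[OF that(1)]] that(2) by (metis add_diff_inverse_nat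
          index_vec less_diff_conv add.commute)
    also have "\<dots> = (\<Sum>l<k. w i l * X $$ (l, j))"
      using that(2) k_less_n by (simp add: encode_index_suffix)
    finally show ?thesis .
  qed
  have "vec n (\<lambda>j. \<Sum>i\<in>I. u i * w i j) = encode (\<lambda>l. \<Sum>i\<in>I. u i * w i l)"
  proof (rule eq_vecI)
    fix j assume "j < dim_vec (encode (\<lambda>l. \<Sum>i\<in>I. u i * w i l))"
    then have "j < n" by simp
    show "vec n (\<lambda>j. \<Sum>i\<in>I. u i * w i j) $ j = encode (\<lambda>l. \<Sum>i\<in>I. u i * w i l) $ j"
    proof (cases "j < k")
      case False
      then obtain j' where j': "j = k + j'" "j' < n - k"
        using \<open>j < n\<close> by (metis add_diff_inverse_nat diff_less_mono not_less)
      have "(\<Sum>i\<in>I. u i * w i j) = (\<Sum>i\<in>I. \<Sum>l<k. u i * w i l * X $$ (l, j'))"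
        using suffix j' by (simp add: sum_distrib_left mult.assoc)
      also have "\<dots> = (\<Sum>l<k. (\<Sum>i\<in>I. u i * w i l) * X $$ (l, j'))"
        by (subst sum.swap) (simp add: sum_distrib_right)
      finally show ?thesis
        using j' \<open>j < n\<close> by (simp add: encode_index_suffix)
    qed (use \<open>j < n\<close> in simp)
  qed simp
  then show ?thesis unfolding code_eq_range_encode by simp
qed

lemma rank_q_ge_if_nonzero_codeword:
  assumes "v \<in> code" "v \<noteq> 0\<^sub>v n"
  shows "n - k + 1 \<le> rank_q q v"
proof -
  have "0\<^sub>v n = encode (\<lambda>_. 0)"
    by (intro eq_vecI) (auto simp: encode_def)
  then have "0\<^sub>v n \<in> code" unfolding code_eq_range_encode by (metis rangeI)
  moreover have "code \<subseteq> carrier_vec n"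
    unfolding code_eq_range_encode by (auto intro: carrier_vecI)
  ultimately have "n - k + 1 \<le> rank_q q (v - 0\<^sub>v n)"
    using min_rank_dist_le_rank_q[of code n v "0\<^sub>v n" q] assms MRD by simp
  moreover have "v - 0\<^sub>v n = v" using assms(1) \<open>code \<subseteq> carrier_vec n\<close> by auto
  ultimately show ?thesis by simp
qed

definition moore_rows_in_code :: "(nat \<Rightarrow> 'a) \<Rightarrow> bool" where
  "moore_rows_in_code g \<longleftrightarrow> (\<forall>i<k. vec n (\<lambda>j. theta i (g j)) \<in> code)"

text \<open>If \<open>g\<close> were dependent, a maximal independent subfamily \<open>J\<close> would have \<open>|J| < n\<close>. Moore
  interpolation on \<open>t = min k |J|\<close> of its members gives a nonzero codeword vanishing on \<open>t - 1\<close>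
  of them, whose entries all lie in the \<open>F_q\<close>-span of its entries on \<open>J\<close>: its rank is at most
  \<open>|J| - t + 1 < n - k + 1\<close>.\<close>
lemma Fq_lin_indep_if_moore_rows_in_code:
  assumes rows: "moore_rows_in_code g" and nonzero: "\<exists>j<n. g j \<noteq> 0"
  shows "Fq_lin_indep q g {0..<n}"
proof (rule ccontr)
  assume dep: "\<not> Fq_lin_indep q g {0..<n}"
  obtain J where J: "J \<subseteq> {0..<n}" "Fq_lin_indep q g J" "\<And>j. j \<in> {0..<n} \<Longrightarrow> g j \<in> Fq_span g J"
    using maximal_Fq_lin_indep_subset[of "{0..<n}" g] by blast
  have "finite J" using J(1) finite_subset by blast
  have "card J < n"
    using J(1,2) dep psubset_card_mono[of "{0..<n}" J] by fastforce
  have "J \<noteq> {}"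
  proof
    assume "J = {}"
    then have "\<forall>j<n. g j = 0" using J(3) by (simp add: Fq_span_def)
    then show False using nonzero by blast
  qed
  define t where "t = min k (card J)"
  have "1 \<le> t" using k_ge_1 \<open>J \<noteq> {}\<close> \<open>finite J\<close> by (simp add: t_def Suc_le_eq card_gt_0_iff)
  obtain K where K: "K \<subseteq> J" "card K = t"
    using obtain_subset_with_card_n[of t J] \<open>finite J\<close> by (metis min.cobounded2 t_def)
  have "finite K" using K(1) \<open>finite J\<close> finite_subset by blast
  obtain j0 where "j0 \<in> K" using K(2) \<open>1 \<le> t\<close> by fastforce
  have "Fq_lin_indep q g K" using Fq_lin_indep_subset J(2) K(1) \<open>finite J\<close> by blast
  then obtain u where "\<And>j. j \<in> K \<Longrightarrow> (\<Sum>i<card K. u i * theta i (g j)) = (if j = j0 then 1 else 0)"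
    using moore_interpolation[OF \<open>finite K\<close>, of g "\<lambda>j. if j = j0 then 1 else 0"] by blast
  note u = this[unfolded K(2)]
  define v where "v = vec n (\<lambda>j. \<Sum>i<t. u i * theta i (g j))"
  have "v \<in> code"
    unfolding v_def using rows by (intro code_lincomb) (auto simp: moore_rows_in_code_def t_def)
  moreover have "v \<noteq> 0\<^sub>v n"
  proof -
    have "j0 < n" using \<open>j0 \<in> K\<close> K(1) J(1) by auto
    then have "v $ j0 = 1" using u[OF \<open>j0 \<in> K\<close>] by (simp add: v_def)
    then show ?thesis using \<open>j0 < n\<close> by auto
  qed
  ultimately have "n - k + 1 \<le> rank_q q v"
    by (rule rank_q_ge_if_nonzero_codeword)
  also have "\<dots> \<le> card (J - (K - {j0}))"
    unfolding v_def using \<open>finite J\<close> J(3) u by (intro rank_q_theta_lincomb_le) auto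
  also have "\<dots> = card J - (t - 1)"
    using K \<open>j0 \<in> K\<close> \<open>finite K\<close> by (subst card_Diff_subset) auto
  finally show False
    using \<open>card J < n\<close> k_less_n by (simp add: t_def min_def split: if_splits)
qed

lemma row_space_gab_mat_eq_code:
  assumes rows: "moore_rows_in_code g" and indep: "Fq_lin_indep q g {0..<k}"
  shows "row_space (gab_mat q s k n g) = code"
proof
  show "row_space (gab_mat q s k n g) \<subseteq> code"
    using rows unfolding row_space_gab_mat moore_rows_in_code_def by (auto intro!: code_lincomb)
next
  show "code \<subseteq> row_space (gab_mat q s k n g)"
  proof
    fix v assume "v \<in> code"
    obtain u where u: "\<And>l. l \<in> {0..<k} \<Longrightarrow> (\<Sum>i<k. u i * theta i (g l)) = v $ l"
      using moore_interpolation[OF _ indep, of "\<lambda>l. v $ l"] by auto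
    define v' where "v' = vec n (\<lambda>j. \<Sum>i<k. u i * theta i (g j))"
    have "v' \<in> code"
      unfolding v'_def using rows by (intro code_lincomb) (auto simp: moore_rows_in_code_def)
    then have "v' = encode (\<lambda>l. v' $ l)" by (rule mem_code_imp_eq_encode)
    also have "\<dots> = encode (\<lambda>l. v $ l)"
      using u k_less_n by (intro encode_cong) (simp add: v'_def)
    also have "\<dots> = v" using mem_code_imp_eq_encode[OF \<open>v \<in> code\<close>] by simp
    finally have "v' = v" .
    then show "v \<in> row_space (gab_mat q s k n g)"
      unfolding row_space_gab_mat v'_def by blast
  qed
qed

lemma frobenius_diff_index:
  "l < k \<Longrightarrow> j < n - k \<Longrightarrow> (frob_mat (q ^ s) X - X) $$ (l, j) = theta 1 (X $$ (l, j)) - X $$ (l, j)"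
  using X_carrier by (auto simp: frob_mat_def theta_def)

lemma frobenius_diff_carrier: "frob_mat (q ^ s) X - X \<in> carrier_mat k (n - k)"
  using X_carrier by (auto simp: frob_mat_def)

text \<open>Each application of \<open>theta 1\<close> to \<open>a X\<close> contributes the term \<open>h\<^sub>j \<Sum>\<^sub>l theta i (a l) f l\<close>,
  which \<open>orth\<close> kills.\<close>
lemma theta_encode:
  assumes outer: "\<And>l j. l < k \<Longrightarrow> j < n - k \<Longrightarrow> theta 1 (X $$ (l, j)) = X $$ (l, j) + f l * h j"
    and orth: "\<And>i. 0 < i \<Longrightarrow> i < k \<Longrightarrow> (\<Sum>l<k. theta i (a l) * f l) = 0"
    and "i < k"
  shows "vec n (\<lambda>j. theta i (encode a $ j)) = encode (\<lambda>l. theta i (a l))"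
proof -
  have suffix: "theta i (\<Sum>l<k. a l * X $$ (l, j)) = (\<Sum>l<k. theta i (a l) * X $$ (l, j))"
    if "j < n - k" for j
    using \<open>i < k\<close>
  proof (induction i)
    case (Suc i)
    have "theta (Suc i) (\<Sum>l<k. a l * X $$ (l, j)) = theta 1 (theta i (\<Sum>l<k. a l * X $$ (l, j)))"
      by (simp add: theta_theta)
    also have "\<dots> = theta 1 (\<Sum>l<k. theta i (a l) * X $$ (l, j))"
      using Suc by simp
    also have "\<dots> = (\<Sum>l<k. theta (Suc i) (a l) * theta 1 (X $$ (l, j)))"
      by (simp add: theta_sum theta_mult theta_theta)
    also have "\<dots> = (\<Sum>l<k. theta (Suc i) (a l) * X $$ (l, j)) + h j * (\<Sum>l<k. theta (Suc i) (a l) * f l)"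
      using outer that by (simp add: algebra_simps sum.distrib sum_distrib_left)
    also have "\<dots> = (\<Sum>l<k. theta (Suc i) (a l) * X $$ (l, j))"
      using orth[of "Suc i"] Suc.prems by simp
    finally show ?case .
  qed simp
  show ?thesis
  proof (rule eq_vecI)
    fix j assume "j < dim_vec (encode (\<lambda>l. theta i (a l)))"
    then have "j < n" by simp
    show "vec n (\<lambda>j. theta i (encode a $ j)) $ j = encode (\<lambda>l. theta i (a l)) $ j"
    proof (cases "j < k")
      case False
      then obtain j' where "j = k + j'" "j' < n - k"
        using \<open>j < n\<close> by (metis add_diff_inverse_nat diff_less_mono not_less)
      then show ?thesis using suffix \<open>j < n\<close> by (simp add: encode_index_suffix)
    qed (use \<open>j < n\<close> in simp)
  qed simp
qed

lemma is_gen_gabidulin_if_rank_le_1: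
  assumes "vec_space.rank k (frob_mat (q ^ s) X - X) \<le> 1"
  shows "is_gen_gabidulin q s k n code"
proof -
  obtain f h where fh: "\<And>l j. l < k \<Longrightarrow> j < n - k \<Longrightarrow> (frob_mat (q ^ s) X - X) $$ (l, j) = f l * h j"
    using rank_le_1_imp_product_entries[OF frobenius_diff_carrier assms] by blast
  have outer: "theta 1 (X $$ (l, j)) = X $$ (l, j) + f l * h j" if "l < k" "j < n - k" for l j
    using fh[OF that] frobenius_diff_index[OF that] by (metis diff_add_cancel add.commute)
  obtain a where a: "\<exists>l<k. a l \<noteq> 0" "\<And>i. 0 < i \<Longrightarrow> i < k \<Longrightarrow> (\<Sum>l<k. theta i (a l) * f l) = 0"
    using exists_nonzero_orthogonal_to_theta_powers[OF k_ge_1] by blast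
  define g where "g j = encode a $ j" for j
  have rows: "moore_rows_in_code g"
    unfolding moore_rows_in_code_def g_def code_eq_range_encode
    using theta_encode[OF outer a(2)] by (metis rangeI)
  obtain l where "l < k" "a l \<noteq> 0" using a(1) by blast
  then have "\<exists>j<n. g j \<noteq> 0" using k_less_n by (auto simp: g_def intro!: exI[of _ l])
  then have indep: "Fq_lin_indep q g {0..<n}"
    by (rule Fq_lin_indep_if_moore_rows_in_code[OF rows])
  then have "row_space (gab_mat q s k n g) = code"
    using rows Fq_lin_indep_subset k_less_n by (intro row_space_gab_mat_eq_code) auto
  then show ?thesis using indep unfolding is_gen_gabidulin_def by blast
qed

lemma moore_rows_in_code_if_row_space_gab_mat:
  assumes "row_space (gab_mat q s k n g) = code"
  shows "moore_rows_in_code g"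
  unfolding moore_rows_in_code_def
proof (intro allI impI)
  fix i assume "i < k"
  have "(\<Sum>i'<k. (if i' = i then 1 else 0) * theta i' (g j)) = theta i (g j)" for j
    using \<open>i < k\<close> by (simp add: sum_delta_mult)
  then have "vec n (\<lambda>j. theta i (g j))
      = vec n (\<lambda>j. \<Sum>i'<k. (if i' = i then 1 else 0) * theta i' (g j))"
    by simp
  then have "vec n (\<lambda>j. theta i (g j)) \<in> row_space (gab_mat q s k n g)"
    unfolding row_space_gab_mat by (auto intro!: exI[of _ "\<lambda>i'. if i' = i then 1 else 0"])
  then show "vec n (\<lambda>j. theta i (g j)) \<in> code" using assms by simp
qed

lemma moore_rows_in_code_suffix:
  assumes "moore_rows_in_code g" "i < k" "j < n - k"
  shows "theta i (g (k + j)) = (\<Sum>l<k. theta i (g l) * X $$ (l, j))"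
proof -
  have "vec n (\<lambda>j. theta i (g j)) \<in> code"
    using assms(1,2) by (simp add: moore_rows_in_code_def)
  then have "vec n (\<lambda>j. theta i (g j)) = encode (\<lambda>l. vec n (\<lambda>j. theta i (g j)) $ l)"
    by (rule mem_code_imp_eq_encode)
  also have "\<dots> = encode (\<lambda>l. theta i (g l))"
    using k_less_n by (intro encode_cong) simp
  finally have "vec n (\<lambda>j. theta i (g j)) $ (k + j) = encode (\<lambda>l. theta i (g l)) $ (k + j)"
    by simp
  then show ?thesis
    using assms(3) by (simp add: encode_index_suffix)
qed

text \<open>Let \<open>D = theta 1 X - X\<close> and \<open>G = (theta i (g l))\<close>. The code relations
  \<open>theta 1 (G\<^sub>i X) = G\<^sub>i\<^sub>+\<^sub>1 X\<close> say that all rows of \<open>(theta 1 G) D\<close> but the last vanish, and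
  \<open>theta 1 G\<close> is invertible, so \<open>D\<close> is a column times that last row.\<close>
lemma frobenius_diff_product_entries:
  assumes rows: "moore_rows_in_code g" and indep: "Fq_lin_indep q g {0..<k}"
  obtains f h where "\<And>r j. r < k \<Longrightarrow> j < n - k \<Longrightarrow> (frob_mat (q ^ s) X - X) $$ (r, j) = f r * h j"
proof -
  let ?D = "frob_mat (q ^ s) X - X"
  let ?S = "\<lambda>i j. \<Sum>l<k. theta (Suc i) (g l) * ?D $$ (l, j)"
  obtain C where C: "\<And>r l. l < k \<Longrightarrow> (\<Sum>i<k. C r i * theta i (g l)) = (if l = r then 1 else 0)"
    using exists_moore_inverse[OF indep] by blast
  have vanish: "?S i j = 0" if "Suc i < k" "j < n - k" for i j
  proof -
    have "?S i j = theta 1 (\<Sum>l<k. theta i (g l) * X $$ (l, j)) - (\<Sum>l<k. theta (Suc i) (g l) * X $$ (l, j))"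
      using that(2) by (simp add: frobenius_diff_index theta_sum theta_mult theta_theta
          right_diff_distrib sum_subtractf)
    also have "theta 1 (\<Sum>l<k. theta i (g l) * X $$ (l, j)) = theta (Suc i) (g (k + j))"
      using moore_rows_in_code_suffix[OF rows, of i j, symmetric] that by (simp add: theta_theta)
    also have "\<dots> = (\<Sum>l<k. theta (Suc i) (g l) * X $$ (l, j))"
      using moore_rows_in_code_suffix[OF rows, of "Suc i" j] that by simp
    finally show ?thesis by simp
  qed
  have "?D $$ (r, j) = theta 1 (C r (k - 1)) * ?S (k - 1) j" if "r < k" "j < n - k" for r j
  proof -
    have "(\<Sum>l<k. theta 1 (\<Sum>i<k. C r i * theta i (g l)) * ?D $$ (l, j))
        = (\<Sum>l<k. (if l = r then 1 else 0) * ?D $$ (l, j))"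
      using C by (intro sum.cong) auto
    then have "?D $$ (r, j) = (\<Sum>l<k. theta 1 (\<Sum>i<k. C r i * theta i (g l)) * ?D $$ (l, j))"
      using that(1) by (simp add: sum_delta_mult)
    also have "\<dots> = (\<Sum>l<k. \<Sum>i<k. theta 1 (C r i) * (theta (Suc i) (g l) * ?D $$ (l, j)))"
      by (simp add: theta_sum theta_mult theta_theta sum_distrib_right mult.assoc)
    also have "\<dots> = (\<Sum>i<k. theta 1 (C r i) * ?S i j)"
      by (subst sum.swap) (simp add: sum_distrib_left)
    also have "\<dots> = theta 1 (C r (k - 1)) * ?S (k - 1) j + (\<Sum>i\<in>{..<k} - {k - 1}. theta 1 (C r i) * ?S i j)"
      using k_ge_1 by (intro sum.remove) auto
    also have "(\<Sum>i\<in>{..<k} - {k - 1}. theta 1 (C r i) * ?S i j) = 0"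
    proof (rule sum.neutral, intro ballI)
      fix i assume "i \<in> {..<k} - {k - 1}"
      then have "Suc i < k" by auto
      then show "theta 1 (C r i) * ?S i j = 0" using vanish[OF _ that(2)] by simp
    qed
    finally show ?thesis by simp
  qed
  then show thesis by (rule that)
qed

lemma rank_le_1_if_gen_gabidulin:
  assumes "is_gen_gabidulin q s k n code"
  shows "vec_space.rank k (frob_mat (q ^ s) X - X) \<le> 1"
proof -
  obtain g where indep: "Fq_lin_indep q g {0..<n}" and gab: "row_space (gab_mat q s k n g) = code"
    using assms unfolding is_gen_gabidulin_def by blast
  have "Fq_lin_indep q g {0..<k}"
    using Fq_lin_indep_subset[OF indep] k_less_n by auto
  then obtain f h
    where fh: "\<And>r j. r < k \<Longrightarrow> j < n - k \<Longrightarrow> (frob_mat (q ^ s) X - X) $$ (r, j) = f r * h j"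
    using frobenius_diff_product_entries[OF moore_rows_in_code_if_row_space_gab_mat[OF gab]] by blast
  show ?thesis
  proof (rule vec_space.rank_le_1_product_entries[OF frobenius_diff_carrier])
    fix r j assume "r < dim_row (frob_mat (q ^ s) X - X)" "j < dim_col (frob_mat (q ^ s) X - X)"
    then have "r < k" "j < n - k" using frobenius_diff_carrier by auto
    then show "(frob_mat (q ^ s) X - X) $$ (r, j) = f r * h j" by (rule fh)
  qed
qed

lemma exists_X_entry_not_in_subfield:
  "\<exists>l<k. \<exists>j<n - k. theta 1 (X $$ (l, j)) \<noteq> X $$ (l, j)"
proof (rule ccontr)
  assume "\<not> ?thesis"
  then have X_Fq: "X $$ (l, j) \<in> Fq" if "l < k" "j < n - k" for l j
    using that theta_fixed_imp_subfield_q by blast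
  define v where "v = encode (\<lambda>l. if l = 0 then 1 else 0)"
  have "v \<in> code" unfolding v_def code_eq_range_encode by simp
  moreover have "v $ 0 = 1" using k_ge_1 by (simp add: v_def)
  then have "v \<noteq> 0\<^sub>v n" using k_less_n by auto
  ultimately have "n - k + 1 \<le> rank_q q v" by (rule rank_q_ge_if_nonzero_codeword)
  moreover have "rank_q q v \<le> card {0::nat}"
  proof (rule rank_q_le_card_if_Fq_span)
    fix j assume "j < dim_vec v"
    then have "v $ j \<in> Fq"
      using k_ge_1 X_Fq[of 0 "j - k"] by (cases "j < k") (auto simp: v_def encode_def sum_delta_mult)
    then show "v $ j \<in> Fq_span (\<lambda>l. v $ l) {0}"
      using Fq_spanI[of "{0}" "\<lambda>_. v $ j" "\<lambda>l. v $ l"] \<open>v $ 0 = 1\<close> by simp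
  qed simp
  ultimately show False using k_less_n by simp
qed

theorem is_gen_gabidulin_iff_rank_eq_1:
  "is_gen_gabidulin q s k n code \<longleftrightarrow> vec_space.rank k (frob_mat (q ^ s) X - X) = 1"
proof
  assume gab: "is_gen_gabidulin q s k n code"
  obtain l j where "l < k" "j < n - k" "theta 1 (X $$ (l, j)) \<noteq> X $$ (l, j)"
    using exists_X_entry_not_in_subfield by blast
  then have "1 \<le> vec_space.rank k (frob_mat (q ^ s) X - X)"
    by (intro rank_ge_1_if_entry_nonzero[OF frobenius_diff_carrier]) (auto simp: frobenius_diff_index)
  then show "vec_space.rank k (frob_mat (q ^ s) X - X) = 1"
    using rank_le_1_if_gen_gabidulin[OF gab] by simp
qed (simp add: is_gen_gabidulin_if_rank_le_1)

end

theorem lemma3p3: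
  fixes q m n k s :: nat and X :: "'a::{field,finite} mat"
  assumes q_pp: "\<exists>p e. prime p \<and> e \<ge> 1 \<and> q = p ^ e"
    and card_F: "card (UNIV :: 'a set) = q ^ m"
    and m2: "m \<ge> 2"
    and k1: "1 \<le> k" and kn: "k \<le> n - 1"
    and X_dim: "X \<in> carrier_mat k (n - k)"
    and MRD: "min_rank_dist q (row_space (sys_gen k n X)) = n - k + 1"
    and s_pos: "0 < s" and s_lt: "s < m" and s_cop: "coprime s m"
  shows "is_gen_gabidulin q s k n (row_space (sys_gen k n X))
           \<longleftrightarrow> vec_space.rank k (frob_mat (q ^ s) X - X) = 1"
proof -
  interpret systematic_MRD_code "TYPE('a)" q m s k n X
    using assms by unfold_locales auto
  show ?thesis by (rule is_gen_gabidulin_iff_rank_eq_1)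
qed

end
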